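(* Let $\mathfrak{g}$ be a three-dimensional Lie algebra, and fix a basis of $\mathfrak{g}$ (identifying $\mathfrak{g}\cong\mathbb{R}^3$). Let \[ F := \left\{ \begin{pmatrix} x_{11} & 0 & 0 \\ x_{21} & x_{22} & 0 \\ x_{31} & 0 & x_{22} \end{pmatrix} \;\middle|\; x_{11}, x_{22} > 0 \right\}. \] If $F \subset \mathbb{R}^\times \mathrm{Aut}(\mathfrak{g})$, then \[ L' := \left\{ \begin{pmatrix} 1 & 0 & 0 \\ 0 & 1 & 0 \\ 0 & a_{32} & a_{33} \end{pmatrix} \;\middle|\; a_{33} > 0 \right\} \] is a set of representatives of $\mathfrak{PM}$, i.e. $\mathfrak{PM} = \{ [h.\langle\cdot,\cdot\rangle_0] \mid h \in L' \}$.
   Context: $\mathbb{R}^\times$ denotes the nonzero scalar maps on $\mathfrak{g}$ and $\mathrm{Aut}(\mathfrak{g})$ the automorphism group. $\mathrm{GL}_3(\mathbb{R})$ acts on inner products by $g.\langle\cdot,\cdot\rangle := \langle g^{-1}\cdot, g^{-1}\cdot\rangle$; $\langle\cdot,\cdot\rangle_0$ is the inner product making the canonical basis $\{e_1,e_2,e_3\}$ orthonormal. Two inner products are isometric up to scaling if $\langle\cdot,\cdot\rangle_1 = k\langle f\cdot, f\cdot\rangle_2$ for some $k>0$ and automorphism $f$; $[\cdot]$ denotes the equivalence class, and $\mathfrak{PM}$ is the set of all equivalence classes of inner products on $\mathfrak{g}$ (the moduli space of left-invariant Riemannian metrics). *)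

theory Defs
  imports "HOL-Analysis.Analysis"
begin

type_synonym vec3 = "real^3"
type_synonym mat3 = "real^3^3"

definition lie_bracket :: "(vec3 \<Rightarrow> vec3 \<Rightarrow> vec3) \<Rightarrow> bool" where
  "lie_bracket br \<longleftrightarrow>
     (\<forall>z. linear (\<lambda>x. br x z)) \<and> (\<forall>x. linear (br x)) \<and>
     (\<forall>x. br x x = 0) \<and>
     (\<forall>x y z. br x (br y z) + br y (br z x) + br z (br x y) = 0)"

definition lie_aut :: "(vec3 \<Rightarrow> vec3 \<Rightarrow> vec3) \<Rightarrow> mat3 set" where
  "lie_aut br = {f. invertible f \<and> (\<forall>x y. f *v br x y = br (f *v x) (f *v y))}"

definition scal_aut :: "(vec3 \<Rightarrow> vec3 \<Rightarrow> vec3) \<Rightarrow> mat3 set" where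
  "scal_aut br = {c *\<^sub>R f | c f. c \<noteq> 0 \<and> f \<in> lie_aut br}"

definition inner_prod :: "(vec3 \<Rightarrow> vec3 \<Rightarrow> real) \<Rightarrow> bool" where
  "inner_prod ip \<longleftrightarrow> bilinear ip \<and> (\<forall>x y. ip x y = ip y x) \<and> (\<forall>x. x \<noteq> 0 \<longrightarrow> ip x x > 0)"

definition act :: "mat3 \<Rightarrow> (vec3 \<Rightarrow> vec3 \<Rightarrow> real) \<Rightarrow> (vec3 \<Rightarrow> vec3 \<Rightarrow> real)" where
  "act g ip = (\<lambda>x y. ip (matrix_inv g *v x) (matrix_inv g *v y))"

definition ip0 :: "vec3 \<Rightarrow> vec3 \<Rightarrow> real" where
  "ip0 = (\<lambda>x y. x \<bullet> y)"

definition iso_scal :: "(vec3 \<Rightarrow> vec3 \<Rightarrow> vec3) \<Rightarrow> (vec3 \<Rightarrow> vec3 \<Rightarrow> real) \<Rightarrow> (vec3 \<Rightarrow> vec3 \<Rightarrow> real) \<Rightarrow> bool" where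
  "iso_scal br ip1 ip2 \<longleftrightarrow>
     (\<exists>k>0. \<exists>f\<in>lie_aut br. \<forall>x y. ip1 x y = k * ip2 (f *v x) (f *v y))"

definition ip_class :: "(vec3 \<Rightarrow> vec3 \<Rightarrow> vec3) \<Rightarrow> (vec3 \<Rightarrow> vec3 \<Rightarrow> real) \<Rightarrow> (vec3 \<Rightarrow> vec3 \<Rightarrow> real) set" where
  "ip_class br ip = {ip'. inner_prod ip' \<and> iso_scal br ip' ip}"

definition PM :: "(vec3 \<Rightarrow> vec3 \<Rightarrow> vec3) \<Rightarrow> (vec3 \<Rightarrow> vec3 \<Rightarrow> real) set set" where
  "PM br = {ip_class br ip | ip. inner_prod ip}"

definition setF :: "mat3 set" where
  "setF = {vector [vector [x11, 0, 0], vector [x21, x22, 0], vector [x31, 0, x22]]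
           | x11 x21 x22 x31. x11 > 0 \<and> x22 > 0}"

definition setL' :: "mat3 set" where
  "setL' = {vector [vector [1, 0, 0], vector [0, 1, 0], vector [0, a32, a33]]
           | a32 a33. a33 > 0}"

end

theory Submission
  imports Defs
begin

text \<open>
  By Cholesky, every inner product is \<open>\<langle>U\<cdot>, U\<cdot>\<rangle>\<^sub>0\<close> with \<open>U\<close> lower triangular
  with positive diagonal, and every such \<open>U\<close> factors as \<open>h\<^sup>-\<^sup>1 \<phi>\<close> with \<open>h \<in> L'\<close>
  and \<open>\<phi> \<in> F\<close>. As \<open>\<phi>\<close> is a nonzero multiple of an automorphism, pulling back
  \<open>h.\<langle>\<cdot>,\<cdot>\<rangle>\<^sub>0\<close> along \<open>\<phi>\<close> stays in its class. The Lie bracket enters only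
  through the hypothesis \<open>F \<subseteq> \<real>\<^sup>\<times> Aut\<close>.
\<close>

lemma matrix_inv_mul:
  fixes A :: "'a::semiring_1^'n^'m"
  assumes "invertible A"
  shows "A ** matrix_inv A = mat 1" and "matrix_inv A ** A = mat 1"
  using someI_ex[OF assms[unfolded invertible_def]] unfolding matrix_inv_def by blast+

lemma matrix_inv_unique:
  fixes A :: "'a::semiring_1^'n^'m"
  assumes "A ** B = mat 1" "B ** A = mat 1"
  shows "matrix_inv A = B"
proof -
  have inv: "invertible A" using assms unfolding invertible_def by blast
  have "matrix_inv A = matrix_inv A ** (A ** B)" using assms by simp
  also have "\<dots> = B" by (simp add: matrix_mul_assoc matrix_inv_mul[OF inv])
  finally show ?thesis .
qed

lemma lie_aut_matrix_inv:
  assumes "f \<in> lie_aut br"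
  shows "matrix_inv f \<in> lie_aut br"
proof -
  have inv: "invertible f" and hom: "\<And>x y. f *v br x y = br (f *v x) (f *v y)"
    using assms by (auto simp: lie_aut_def)
  let ?g = "matrix_inv f"
  have "?g *v br x y = br (?g *v x) (?g *v y)" for x y
  proof -
    have "br x y = f *v br (?g *v x) (?g *v y)"
      by (simp add: hom matrix_vector_mul_assoc matrix_inv_mul[OF inv])
    then have "?g *v br x y = (?g ** f) *v br (?g *v x) (?g *v y)"
      by (simp add: matrix_vector_mul_assoc)
    also have "\<dots> = br (?g *v x) (?g *v y)" by (simp add: matrix_inv_mul[OF inv])
    finally show ?thesis .
  qed
  moreover have "invertible ?g"
    using matrix_inv_mul[OF inv] unfolding invertible_def by blast
  ultimately show ?thesis by (simp add: lie_aut_def)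
qed

lemma lie_aut_matrix_mul:
  assumes "f \<in> lie_aut br" "g \<in> lie_aut br"
  shows "f ** g \<in> lie_aut br"
proof -
  have "invertible f" "invertible g" using assms by (auto simp: lie_aut_def)
  then have "invertible (f ** g)"
    unfolding invertible_def by (metis matrix_mul_assoc matrix_mul_lid)
  moreover have "(f ** g) *v br x y = br ((f ** g) *v x) ((f ** g) *v y)" for x y
    using assms by (simp add: lie_aut_def flip: matrix_vector_mul_assoc)
  ultimately show ?thesis by (simp add: lie_aut_def)
qed

lemma iso_scal_sym:
  assumes "iso_scal br ip1 ip2"
  shows "iso_scal br ip2 ip1"
proof -
  obtain k f where k: "k > 0" and f: "f \<in> lie_aut br"
    and eq: "\<And>x y. ip1 x y = k * ip2 (f *v x) (f *v y)"
    using assms unfolding iso_scal_def by blast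
  have inv: "invertible f" using f by (simp add: lie_aut_def)
  have "ip2 x y = (1/k) * ip1 (matrix_inv f *v x) (matrix_inv f *v y)" for x y
    using k by (simp add: eq matrix_vector_mul_assoc matrix_inv_mul[OF inv])
  then show ?thesis
    unfolding iso_scal_def using k lie_aut_matrix_inv[OF f] by (intro exI[of _ "1/k"]) auto
qed

lemma iso_scal_trans:
  assumes "iso_scal br ip1 ip2" "iso_scal br ip2 ip3"
  shows "iso_scal br ip1 ip3"
proof -
  obtain k f where k: "k > 0" and f: "f \<in> lie_aut br"
    and eq1: "\<And>x y. ip1 x y = k * ip2 (f *v x) (f *v y)"
    using assms(1) unfolding iso_scal_def by blast
  obtain k' g where k': "k' > 0" and g: "g \<in> lie_aut br"
    and eq2: "\<And>x y. ip2 x y = k' * ip3 (g *v x) (g *v y)"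
    using assms(2) unfolding iso_scal_def by blast
  have "ip1 x y = (k * k') * ip3 ((g ** f) *v x) ((g ** f) *v y)" for x y
    by (simp add: eq1 eq2 matrix_vector_mul_assoc)
  then show ?thesis
    unfolding iso_scal_def using k k' lie_aut_matrix_mul[OF g f] by (intro exI[of _ "k * k'"]) auto
qed

lemma ip_class_eq:
  assumes "iso_scal br ip1 ip2"
  shows "ip_class br ip1 = ip_class br ip2"
  unfolding ip_class_def using assms iso_scal_sym iso_scal_trans by blast

lemma iso_scal_pullback_scal_aut:
  assumes "bilinear ip" and "\<phi> \<in> scal_aut br"
  shows "iso_scal br (\<lambda>x y. ip (\<phi> *v x) (\<phi> *v y)) ip"
proof -
  obtain c f where c: "c \<noteq> 0" and f: "f \<in> lie_aut br" and \<phi>: "\<phi> = c *\<^sub>R f"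
    using assms(2) unfolding scal_aut_def by blast
  have "ip (\<phi> *v x) (\<phi> *v y) = (c * c) * ip (f *v x) (f *v y)" for x y
    by (simp add: \<phi> flip: scaleR_matrix_vector_assoc
        add: bilinear_lmul[OF assms(1)] bilinear_rmul[OF assms(1)])
  moreover have "c * c > 0" using c by (metis not_real_square_gt_zero)
  ultimately show ?thesis unfolding iso_scal_def using f by blast
qed

lemma inner_prod_act:
  assumes "inner_prod ip" and "invertible h"
  shows "inner_prod (act h ip)"
proof -
  let ?g = "matrix_inv h"
  have bil: "bilinear ip" and sym: "\<And>x y. ip x y = ip y x"
    and pos: "\<And>x. x \<noteq> 0 \<Longrightarrow> ip x x > 0"
    using assms(1) by (auto simp: inner_prod_def)
  have "bilinear (\<lambda>x y. ip (?g *v x) (?g *v y))"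
    using bil linear_compose[OF matrix_vector_mul_linear[of ?g]]
    unfolding bilinear_def by (simp add: o_def) blast
  moreover have "?g *v x \<noteq> 0" if "x \<noteq> 0" for x
    using that matrix_inv_mul[OF assms(2)]
    by (metis matrix_vector_mul_assoc matrix_vector_mul_lid matrix_vector_mult_0_right)
  ultimately show ?thesis
    unfolding inner_prod_def act_def using sym pos by blast
qed

lemma cholesky_3x3:
  fixes m11 m12 m13 m22 m23 m33 :: real
  assumes pos_def: "\<And>w1 w2 w3. \<not> (w1 = 0 \<and> w2 = 0 \<and> w3 = 0) \<Longrightarrow>
    0 < w1*w1*m11 + 2*w1*w2*m12 + 2*w1*w3*m13 + w2*w2*m22 + 2*w2*w3*m23 + w3*w3*m33"
  shows "\<exists>u11 u21 u22 u31 u32 u33. u11 > 0 \<and> u22 > 0 \<and> u33 > 0 \<and>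
    m33 = u33*u33 \<and> m23 = u32*u33 \<and> m13 = u31*u33 \<and>
    m22 = u22*u22 + u32*u32 \<and> m12 = u21*u22 + u31*u32 \<and> m11 = u11*u11 + u21*u21 + u31*u31"
proof -
  have "m33 > 0" using pos_def[of 0 0 1] by simp
  define u33 where "u33 = sqrt m33"
  define u32 where "u32 = m23 / u33"
  define u31 where "u31 = m13 / u33"
  have u33: "u33 > 0" "m33 = u33*u33" using \<open>m33 > 0\<close> by (simp_all add: u33_def)
  have u3: "m23 = u32*u33" "m13 = u31*u33" using u33 by (simp_all add: u32_def u31_def)
  \<comment> \<open>each pivot is the form evaluated at a vector on which the later rows of the factor vanish\<close>
  have "0 < m22 - u32*u32"
    using pos_def[of 0 1 "-u32/u33"] u33 by (simp add: u3 field_simps)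
  define u22 where "u22 = sqrt (m22 - u32*u32)"
  define u21 where "u21 = (m12 - u31*u32) / u22"
  have u22: "u22 > 0" "m22 = u22*u22 + u32*u32"
    using \<open>0 < m22 - u32*u32\<close> by (simp_all add: u22_def)
  have u2: "m12 = u21*u22 + u31*u32" using u22 by (simp add: u21_def)
  have "0 < m11 - u21*u21 - u31*u31"
  proof -
    define t where "t = (u32*u21/u22 - u31)/u33"
    have "0 < m11 + 2*(-u21/u22)*m12 + 2*t*m13 + (-u21/u22)*(-u21/u22)*m22
              + 2*(-u21/u22)*t*m23 + t*t*m33"
      using pos_def[of 1 "-u21/u22" t] by simp
    also have "\<dots> = m11 - u21*u21 - u31*u31"
      using u33 u22 by (simp add: u3 u2 t_def field_simps)
    finally show ?thesis .
  qed
  define u11 where "u11 = sqrt (m11 - u21*u21 - u31*u31)"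
  have u11: "u11 > 0" "m11 = u11*u11 + u21*u21 + u31*u31"
    using \<open>0 < m11 - u21*u21 - u31*u31\<close> by (simp_all add: u11_def)
  show ?thesis using u11 u22 u33 u3 u2 by blast
qed

lemma vec3_eq_sum_axis:
  fixes x :: "real^3"
  shows "x = x$1 *\<^sub>R axis 1 1 + x$2 *\<^sub>R axis 2 1 + x$3 *\<^sub>R axis 3 1"
  unfolding vec_eq_iff forall_3 by (simp add: axis_def)

lemma bilinear_vec3_expand:
  fixes ip :: "real^3 \<Rightarrow> real^3 \<Rightarrow> real"
  assumes bil: "bilinear ip"
  defines "m \<equiv> \<lambda>i j. ip (axis i 1) (axis j 1)"
  shows "ip x y = x$1*y$1*m 1 1 + x$1*y$2*m 1 2 + x$1*y$3*m 1 3
               + x$2*y$1*m 2 1 + x$2*y$2*m 2 2 + x$2*y$3*m 2 3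
               + x$3*y$1*m 3 1 + x$3*y$2*m 3 2 + x$3*y$3*m 3 3"
  by (subst vec3_eq_sum_axis[of x], subst vec3_eq_sum_axis[of y])
    (simp add: bilinear_ladd[OF bil] bilinear_radd[OF bil] bilinear_lmul[OF bil]
      bilinear_rmul[OF bil] m_def algebra_simps)

lemma matrix_vector_mult_3:
  "((A::real^3^3) *v x)$i = A$i$1*x$1 + A$i$2*x$2 + A$i$3*x$3"
  by (simp add: matrix_vector_mult_def sum_3)

lemma inner_vec3: "(x::real^3) \<bullet> y = x$1*y$1 + x$2*y$2 + x$3*y$3"
  by (simp add: inner_vec_def sum_3)

definition pos_lower_triangular :: "mat3 set" where
  "pos_lower_triangular =
     {vector [vector [u11, 0, 0], vector [u21, u22, 0], vector [u31, u32, u33]]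
      | u11 u21 u22 u31 u32 u33. u11 > 0 \<and> u22 > 0 \<and> u33 > 0}"

lemma inner_prod_cholesky:
  assumes ip: "inner_prod ip"
  shows "\<exists>U\<in>pos_lower_triangular. \<forall>x y. ip x y = (U *v x) \<bullet> (U *v y)"
proof -
  have bil: "bilinear ip" and sym: "\<And>x y. ip x y = ip y x"
    using ip by (auto simp: inner_prod_def)
  define m where "m \<equiv> \<lambda>i j. ip (axis i 1) (axis j 1)"
  have expand: "ip x y = x$1*y$1*m 1 1 + x$1*y$2*m 1 2 + x$1*y$3*m 1 3
               + x$2*y$1*m 1 2 + x$2*y$2*m 2 2 + x$2*y$3*m 2 3
               + x$3*y$1*m 1 3 + x$3*y$2*m 2 3 + x$3*y$3*m 3 3" for x y
    using bilinear_vec3_expand[OF bil, of x y] unfolding m_def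
    by (simp add: sym[of "axis 2 1" "axis 1 1"] sym[of "axis 3 1" "axis 1 1"]
        sym[of "axis 3 1" "axis 2 1"])
  have "0 < w1*w1*m 1 1 + 2*w1*w2*m 1 2 + 2*w1*w3*m 1 3
            + w2*w2*m 2 2 + 2*w2*w3*m 2 3 + w3*w3*m 3 3"
    if "\<not> (w1 = 0 \<and> w2 = 0 \<and> w3 = 0)" for w1 w2 w3
  proof -
    have "vector [w1, w2, w3] \<noteq> (0::real^3)" using that by (auto simp: vec_eq_iff forall_3)
    then have "0 < ip (vector [w1, w2, w3]) (vector [w1, w2, w3])"
      using ip by (simp add: inner_prod_def)
    then show ?thesis by (simp add: expand algebra_simps)
  qed
  then obtain u11 u21 u22 u31 u32 u33 where pos: "u11 > 0" "u22 > 0" "u33 > 0" and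
    m: "m 3 3 = u33*u33" "m 2 3 = u32*u33" "m 1 3 = u31*u33"
       "m 2 2 = u22*u22 + u32*u32" "m 1 2 = u21*u22 + u31*u32"
       "m 1 1 = u11*u11 + u21*u21 + u31*u31"
    using cholesky_3x3[of "m 1 1" "m 1 2" "m 1 3" "m 2 2" "m 2 3" "m 3 3"] by auto
  let ?U = "vector [vector [u11, 0, 0], vector [u21, u22, 0], vector [u31, u32, u33]] :: mat3"
  have "?U \<in> pos_lower_triangular"
    unfolding pos_lower_triangular_def using pos by (intro CollectI exI conjI[OF refl]) simp
  moreover have "ip x y = (?U *v x) \<bullet> (?U *v y)" for x y
    unfolding expand m inner_vec3 matrix_vector_mult_3 by (simp add: algebra_simps)
  ultimately show ?thesis by blast
qed

lemma matrix_inv_L'_shape: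
  fixes a32 a33 :: real
  assumes "a33 \<noteq> 0"
  defines "h \<equiv> vector [vector [1, 0, 0], vector [0, 1, 0], vector [0, a32, a33]] :: mat3"
  shows "invertible h"
    and "matrix_inv h = vector [vector [1, 0, 0], vector [0, 1, 0], vector [0, -a32/a33, 1/a33]]"
proof -
  let ?B = "vector [vector [1, 0, 0], vector [0, 1, 0], vector [0, -a32/a33, 1/a33]] :: mat3"
  have "h ** ?B = mat 1" "?B ** h = mat 1"
    using assms
    by (simp_all add: h_def vec_eq_iff forall_3 matrix_matrix_mult_def sum_3 mat_def field_simps)
  then show "invertible h" "matrix_inv h = ?B"
    by (auto simp: invertible_def intro: matrix_inv_unique)
qed

lemma pos_lower_triangular_factor:
  assumes "U \<in> pos_lower_triangular"
  shows "\<exists>h\<in>setL'. \<exists>\<phi>\<in>setF. U = matrix_inv h ** \<phi>"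
proof -
  obtain u11 u21 u22 u31 u32 u33 where pos: "u11 > 0" "u22 > 0" "u33 > 0"
    and U: "U = vector [vector [u11, 0, 0], vector [u21, u22, 0], vector [u31, u32, u33]]"
    using assms unfolding pos_lower_triangular_def by blast
  \<comment> \<open>\<open>\<phi>\<close> carries the first two rows of \<open>U\<close>; \<open>h\<^sup>-\<^sup>1\<close> only rebuilds the third row from them\<close>
  define b32 where "b32 = u32 / u22"
  define b33 where "b33 = u33 / u22"
  define y31 where "y31 = (u31 - b32 * u21) / b33"
  have "b33 > 0" using pos by (simp add: b33_def)
  let ?h = "vector [vector [1, 0, 0], vector [0, 1, 0], vector [0, -b32/b33, 1/b33]] :: mat3"
  let ?\<phi> = "vector [vector [u11, 0, 0], vector [u21, u22, 0], vector [y31, 0, u22]] :: mat3"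
  have h_inv: "matrix_inv ?h = vector [vector [1, 0, 0], vector [0, 1, 0], vector [0, b32, b33]]"
    using matrix_inv_L'_shape(2)[of "1/b33" "-b32/b33"] \<open>b33 > 0\<close> by simp
  have "U = matrix_inv ?h ** ?\<phi>"
    unfolding h_inv using pos \<open>b33 > 0\<close>
    by (simp add: U vec_eq_iff forall_3 matrix_matrix_mult_def sum_3 y31_def b32_def b33_def
        field_simps)
  moreover have "?h \<in> setL'"
    unfolding setL'_def using \<open>b33 > 0\<close>
    by (intro CollectI exI[of _ "-b32/b33"] exI[of _ "1/b33"]) simp
  moreover have "?\<phi> \<in> setF"
    unfolding setF_def using pos by (intro CollectI exI conjI[OF refl]) simp
  ultimately show ?thesis by blast
qed

lemma setL'_invertible: "h \<in> setL' \<Longrightarrow> invertible h"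
  unfolding setL'_def using matrix_inv_L'_shape(1) by fastforce

lemma inner_prod_ip0: "inner_prod ip0"
  by (simp add: inner_prod_def ip0_def bilinear_conv_bounded_bilinear bounded_bilinear_inner
      inner_commute)

theorem lemma3p7:
  fixes br :: "real^3 \<Rightarrow> real^3 \<Rightarrow> real^3"
  assumes "lie_bracket br"
    and "setF \<subseteq> scal_aut br"
  shows "PM br = {ip_class br (act h ip0) | h. h \<in> setL'}"
proof (intro set_eqI iffI)
  fix X assume "X \<in> {ip_class br (act h ip0) | h. h \<in> setL'}"
  then obtain h where "h \<in> setL'" and X: "X = ip_class br (act h ip0)" by blast
  then show "X \<in> PM br"
    unfolding X PM_def using inner_prod_act[OF inner_prod_ip0] setL'_invertible by blast
next
  fix X assume "X \<in> PM br"
  then obtain ip where ip: "inner_prod ip" and X: "X = ip_class br ip"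
    unfolding PM_def by blast
  obtain U where "U \<in> pos_lower_triangular"
    and ip_U: "\<And>x y. ip x y = (U *v x) \<bullet> (U *v y)"
    using inner_prod_cholesky[OF ip] by blast
  then obtain h \<phi> where h: "h \<in> setL'" and "\<phi> \<in> setF" and U: "U = matrix_inv h ** \<phi>"
    using pos_lower_triangular_factor by blast
  have "ip = (\<lambda>x y. act h ip0 (\<phi> *v x) (\<phi> *v y))"
    by (simp add: fun_eq_iff ip_U U act_def ip0_def matrix_vector_mul_assoc)
  moreover have "bilinear (act h ip0)"
    using inner_prod_act[OF inner_prod_ip0 setL'_invertible[OF h]] by (simp add: inner_prod_def)
  ultimately have "iso_scal br ip (act h ip0)"
    using iso_scal_pullback_scal_aut \<open>\<phi> \<in> setF\<close> assms(2) by blast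
  then show "X \<in> {ip_class br (act h ip0) | h. h \<in> setL'}"
    using X h ip_class_eq by blast
qed

end
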